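(* Let a Cartesian mesh with cells $I_{ij}$ of sizes $\Delta x_i,\Delta y_j$ and cell averages $\overline{\bm{U}}^n_{ij}\in\mathcal{G}$ be given, and let $\Delta t^n\le\frac14\min_{i,j}\big(\Delta x_i/\alpha^n_{i+\frac12,j},\ \Delta y_j/\beta^n_{i,j+\frac12}\big)$. Let $\widehat{\bm{F}}^{\rm high}_{i+\frac12,j},\widehat{\bm{G}}^{\rm high}_{i,j+\frac12}\in\mathbb{R}^4$ be the high-order numerical fluxes, and let $\widehat{\bm{F}}^{\rm low},\widehat{\bm{G}}^{\rm low}$, the limited fluxes $\widehat{\bm{F}}^{\rm PCP},\widehat{\bm{G}}^{\rm PCP}$ and the states $\bm{U}^{\pm,\rm low}_{ij},\widetilde{\bm{U}}^{\pm,\rm low}_{ij}$ be as in the context. Assume $\bm{U}^{\pm,\rm low}_{ij},\widetilde{\bm{U}}^{\pm,\rm low}_{ij}\in\mathcal{G}$ for all $i,j$. Then for the scheme $$\overline{\bm{U}}^{n+1}_{ij}=\overline{\bm{U}}^n_{ij}-\frac{\Delta t^n}{\Delta x_i}\big(\widehat{\bm{F}}^{\rm PCP}_{i+\frac12,j}-\widehat{\bm{F}}^{\rm PCP}_{i-\frac12,j}\big)-\frac{\Delta t^n}{\Delta y_j}\big(\widehat{\bm{G}}^{\rm PCP}_{i,j+\frac12}-\widehat{\bm{G}}^{\rm PCP}_{i,j-\frac12}\big)$$ one has, for all $i,j$, $$\overline{\bm{U}}^{n+1}_{ij}=\tfrac14\big(\bm{U}^{+,\rm PCP}_{ij}+\bm{U}^{-,\rm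 PCP}_{ij}+\widetilde{\bm{U}}^{+,\rm PCP}_{ij}+\widetilde{\bm{U}}^{-,\rm PCP}_{ij}\big)\in\mathcal{G},$$ where $\bm{U}^{\pm,\rm PCP}_{ij}=\overline{\bm{U}}^n_{ij}\mp\frac{4\Delta t^n}{\Delta x_i}\widehat{\bm{F}}^{\rm PCP}_{i\pm\frac12,j}$ and $\widetilde{\bm{U}}^{\pm,\rm PCP}_{ij}=\overline{\bm{U}}^n_{ij}\mp\frac{4\Delta t^n}{\Delta y_j}\widehat{\bm{G}}^{\rm PCP}_{i,j\pm\frac12}$.
   Context: Setting: 2D special relativistic hydrodynamics ($c=1$), $\bm{U}_t+\bm{F}(\bm{U})_x+\bm{G}(\bm{U})_y=0$ with $\bm{U}=(D,\bm{m},E)^T$, $D=\rho\gamma$, $\bm{m}=\rho h\gamma^2\bm{u}$, $E=\rho h\gamma^2-p$, $h=1+e+p/\rho$, $p=(\Gamma-1)\rho e$, $\Gamma\in(1,2]$, $\gamma=(1-|\bm{u}|^2)^{-1/2}$, $\bm{F}=(Du_1,\bm{m}u_1+p\bm{e}_1,(E+p)u_1)^T$, $\bm{G}=(Du_2,\bm{m}u_2+p\bm{e}_2,(E+p)u_2)^T$. Admissible set $\mathcal{G}=\{\bm{U}: D>0,\ q(\bm{U})>0\}$ with $q(\bm{U})=E-\sqrt{D^2+|\bm{m}|^2}$. $\varrho^x,\varrho^y$ denote the spectral radii of $\partial\bm{F}/\partial\bm{U}$, $\partial\bm{G}/\partial\bm{U}$; $\alpha^n_{i+\frac12,j}=\max\{\varrho^x(\overline{\bm{U}}^n_{i+1,j}),\varrho^x(\overline{\bm{U}}^n_{ij})\}$,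 $\beta^n_{i,j+\frac12}=\max\{\varrho^y(\overline{\bm{U}}^n_{i,j+1}),\varrho^y(\overline{\bm{U}}^n_{ij})\}$. Low-order fluxes: $\widehat{\bm{F}}^{\rm low}_{i+\frac12,j}=\frac12\big(\bm{F}(\overline{\bm{U}}^n_{ij})+\bm{F}(\overline{\bm{U}}^n_{i+1,j})-\alpha^n_{i+\frac12,j}(\overline{\bm{U}}^n_{i+1,j}-\overline{\bm{U}}^n_{ij})\big)$, $\widehat{\bm{G}}^{\rm low}_{i,j+\frac12}$ analogous with $\bm{G}$, $\overline{\bm{U}}^n_{i,j+1}$, $\beta^n_{i,j+\frac12}$. The high-order fluxes $\widehat{\bm{F}}^{\rm high},\widehat{\bm{G}}^{\rm high}$ are given vectors (in the paper obtained by Gauss–Lobatto quadrature of 1D and 2D HLL fluxes evaluated at WENO-reconstructed states). For $\ast\in\{\rm low,high,D\}$ define $\bm{U}^{\pm,\ast}_{ij}=\overline{\bm{U}}^n_{ij}\mp\frac{4\Delta t^n}{\Delta x_i}\widehat{\bm{F}}^{\ast}_{i\pm\frac12,j}$, $\widetilde{\bm{U}}^{\pm,\ast}_{ij}=\overline{\bm{U}}^n_{ij}\mp\frac{4\Delta t^n}{\Delta y_j}\widehat{\bm{G}}^{\ast}_{i,j\pm\frac12}$, and write $D^{\pm,\ast}_{ij}$, $\widetilde D^{\pm,\ast}_{ij}$ for their first components. Fix $\varepsilon_D,\varepsilon_q>0$ with $D^{\pm,\rm low}_{ij},\widetilde D^{\pm,\rm low}_{ij}\ge\varepsilon_D$ and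 $q(\bm{U}^{\pm,\rm low}_{ij}),q(\widetilde{\bm{U}}^{\pm,\rm low}_{ij})\ge\varepsilon_q$ for all $i,j$. Limiter step (i): $\theta^{D,x,\pm}_{i+\frac12,j}=\frac{D^{\pm,\rm low}_{i+\frac12\mp\frac12,j}-\varepsilon_D}{D^{\pm,\rm low}_{i+\frac12\mp\frac12,j}-D^{\pm,\rm high}_{i+\frac12\mp\frac12,j}}$ if $D^{\pm,\rm high}_{i+\frac12\mp\frac12,j}<\varepsilon_D$ and $1$ otherwise (here $i+\frac12-\frac12=i$, $i+\frac12+\frac12=i+1$); $\theta^{D,x}_{i+\frac12,j}=\min\{\theta^{D,x,+}_{i+\frac12,j},\theta^{D,x,-}_{i+\frac12,j}\}$; $\widehat{\bm{F}}^{\rm D}_{i+\frac12,j}$ has first component $(1-\theta^{D,x}_{i+\frac12,j})\{\widehat{\bm{F}}^{\rm low}_{i+\frac12,j}\}_1+\theta^{D,x}_{i+\frac12,j}\{\widehat{\bm{F}}^{\rm high}_{i+\frac12,j}\}_1$ and other components equal to those of $\widehat{\bm{F}}^{\rm high}_{i+\frac12,j}$. $\theta^{D,y,\pm}_{i,j+\frac12}$, $\theta^{D,y}_{i,j+\frac12}$, $\widehat{\bm{G}}^{\rm D}_{i,j+\frac12}$ are defined analogously with $\widetilde D$, index $j$ and $\widehat{\bm{G}}$. Limiter step (ii): $\theta^{q,x,\pm}_{i+\frac12,j}=\frac{q(\bm{U}^{\pm,\rm low}_{i+\frac12\mp\frac12,j})-\varepsilon_q}{q(\bm{U}^{\pm,\rm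 low}_{i+\frac12\mp\frac12,j})-q(\bm{U}^{\pm,\rm D}_{i+\frac12\mp\frac12,j})}$ if $q(\bm{U}^{\pm,\rm D}_{i+\frac12\mp\frac12,j})<\varepsilon_q$ and $1$ otherwise; $\theta^{q,x}_{i+\frac12,j}=\min\{\theta^{q,x,+},\theta^{q,x,-}\}$; $\widehat{\bm{F}}^{\rm PCP}_{i+\frac12,j}=(1-\theta^{q,x}_{i+\frac12,j})\widehat{\bm{F}}^{\rm low}_{i+\frac12,j}+\theta^{q,x}_{i+\frac12,j}\widehat{\bm{F}}^{\rm D}_{i+\frac12,j}$; $\widehat{\bm{G}}^{\rm PCP}_{i,j+\frac12}$ analogously with $\widetilde{\bm{U}}$, $\widehat{\bm{G}}$. *)

theory Defs
  imports "HOL-Analysis.Analysis"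
begin

text \<open>Conservative states U = (D, m1, m2, E) are elements of real^4,
  with components U$1 = D, U$2 = m1, U$3 = m2, U$4 = E.\<close>

definition q_fun :: "real^4 \<Rightarrow> real" where
  "q_fun U = U$4 - sqrt ((U$1)\<^sup>2 + (U$2)\<^sup>2 + (U$3)\<^sup>2)"

definition rhd_admissible :: "real^4 \<Rightarrow> bool" where
  "rhd_admissible U \<longleftrightarrow> U$1 > 0 \<and> q_fun U > 0"

definition cons_of_prim :: "real \<Rightarrow> real \<Rightarrow> real \<Rightarrow> real \<Rightarrow> real \<Rightarrow> real^4" where
  "cons_of_prim \<Gamma> \<rho> u1 u2 p =
     (let e = p / ((\<Gamma> - 1) * \<rho>);
          h = 1 + e + p / \<rho>;
          \<gamma> = 1 / sqrt (1 - u1\<^sup>2 - u2\<^sup>2)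
      in vector [\<rho> * \<gamma>, \<rho> * h * \<gamma>\<^sup>2 * u1, \<rho> * h * \<gamma>\<^sup>2 * u2, \<rho> * h * \<gamma>\<^sup>2 - p])"

definition prim_of_cons :: "real \<Rightarrow> real^4 \<Rightarrow> real \<times> real \<times> real \<times> real" where
  "prim_of_cons \<Gamma> U = (THE V. case V of (\<rho>, u1, u2, p) \<Rightarrow>
      \<rho> > 0 \<and> p > 0 \<and> u1\<^sup>2 + u2\<^sup>2 < 1 \<and> cons_of_prim \<Gamma> \<rho> u1 u2 p = U)"

definition flux_F :: "real \<Rightarrow> real^4 \<Rightarrow> real^4" where
  "flux_F \<Gamma> U = (case prim_of_cons \<Gamma> U of (\<rho>, u1, u2, p) \<Rightarrow>
      vector [U$1 * u1, U$2 * u1 + p, U$3 * u1, (U$4 + p) * u1])"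

definition flux_G :: "real \<Rightarrow> real^4 \<Rightarrow> real^4" where
  "flux_G \<Gamma> U = (case prim_of_cons \<Gamma> U of (\<rho>, u1, u2, p) \<Rightarrow>
      vector [U$1 * u2, U$2 * u2, U$3 * u2 + p, (U$4 + p) * u2])"

definition spec_radius :: "real^'n^'n \<Rightarrow> real" where
  "spec_radius A = Max {cmod z | z. det (mat z - (\<chi> i j. complex_of_real (A$i$j))) = 0}"

definition rho_x :: "real \<Rightarrow> real^4 \<Rightarrow> real" where
  "rho_x \<Gamma> U = spec_radius (matrix (frechet_derivative (flux_F \<Gamma>) (at U)))"

definition rho_y :: "real \<Rightarrow> real^4 \<Rightarrow> real" where
  "rho_y \<Gamma> U = spec_radius (matrix (frechet_derivative (flux_G \<Gamma>) (at U)))"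

text \<open>An x-interface quantity indexed (i,j)
  lives at i+1/2, j (between cells (i,j) and (i+1,j)); a y-interface quantity indexed
  (i,j) lives at i, j+1/2 (between cells (i,j) and (i,j+1)).\<close>

definition alpha_x :: "real \<Rightarrow> (int \<Rightarrow> int \<Rightarrow> real^4) \<Rightarrow> int \<Rightarrow> int \<Rightarrow> real" where
  "alpha_x \<Gamma> Ub i j = max (rho_x \<Gamma> (Ub (i+1) j)) (rho_x \<Gamma> (Ub i j))"

definition beta_y :: "real \<Rightarrow> (int \<Rightarrow> int \<Rightarrow> real^4) \<Rightarrow> int \<Rightarrow> int \<Rightarrow> real" where
  "beta_y \<Gamma> Ub i j = max (rho_y \<Gamma> (Ub i (j+1))) (rho_y \<Gamma> (Ub i j))"

definition F_low :: "real \<Rightarrow> (int \<Rightarrow> int \<Rightarrow> real^4) \<Rightarrow> int \<Rightarrow> int \<Rightarrow> real^4" where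
  "F_low \<Gamma> Ub i j = (1/2) *\<^sub>R (flux_F \<Gamma> (Ub i j) + flux_F \<Gamma> (Ub (i+1) j)
       - alpha_x \<Gamma> Ub i j *\<^sub>R (Ub (i+1) j - Ub i j))"

definition G_low :: "real \<Rightarrow> (int \<Rightarrow> int \<Rightarrow> real^4) \<Rightarrow> int \<Rightarrow> int \<Rightarrow> real^4" where
  "G_low \<Gamma> Ub i j = (1/2) *\<^sub>R (flux_G \<Gamma> (Ub i j) + flux_G \<Gamma> (Ub i (j+1))
       - beta_y \<Gamma> Ub i j *\<^sub>R (Ub i (j+1) - Ub i j))"

definition plus_state :: "real^4 \<Rightarrow> real \<Rightarrow> real^4 \<Rightarrow> real^4" where
  "plus_state U0 lam Fr = U0 - (4 * lam) *\<^sub>R Fr"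

definition minus_state :: "real^4 \<Rightarrow> real \<Rightarrow> real^4 \<Rightarrow> real^4" where
  "minus_state U0 lam Fl = U0 + (4 * lam) *\<^sub>R Fl"

definition theta_lim :: "real \<Rightarrow> real \<Rightarrow> real \<Rightarrow> real" where
  "theta_lim \<epsilon> vlow vhigh = (if vhigh < \<epsilon> then (vlow - \<epsilon>) / (vlow - vhigh) else 1)"

text \<open>Limiter at one interface.  UL, lamL: average and dt/dx of the cell on the left
  (lower) side; UR, lamR: those of the right (upper) side; Fl, Fh: low and high fluxes.\<close>
definition theta_D :: "real \<Rightarrow> real^4 \<Rightarrow> real \<Rightarrow> real^4 \<Rightarrow> real \<Rightarrow> real^4 \<Rightarrow> real^4 \<Rightarrow> real" where
  "theta_D \<epsilon>D UL lamL UR lamR Fl Fh =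
     min (theta_lim \<epsilon>D (plus_state UL lamL Fl $ 1) (plus_state UL lamL Fh $ 1))
         (theta_lim \<epsilon>D (minus_state UR lamR Fl $ 1) (minus_state UR lamR Fh $ 1))"

definition flux_D :: "real \<Rightarrow> real^4 \<Rightarrow> real \<Rightarrow> real^4 \<Rightarrow> real \<Rightarrow> real^4 \<Rightarrow> real^4 \<Rightarrow> real^4" where
  "flux_D \<epsilon>D UL lamL UR lamR Fl Fh =
     (let \<theta> = theta_D \<epsilon>D UL lamL UR lamR Fl Fh
      in (\<chi> k. if k = 1 then (1 - \<theta>) * Fl $ 1 + \<theta> * Fh $ 1 else Fh $ k))"

definition theta_q :: "real \<Rightarrow> real \<Rightarrow> real^4 \<Rightarrow> real \<Rightarrow> real^4 \<Rightarrow> real \<Rightarrow> real^4 \<Rightarrow> real^4 \<Rightarrow> real" where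
  "theta_q \<epsilon>D \<epsilon>q UL lamL UR lamR Fl Fh =
     (let FD = flux_D \<epsilon>D UL lamL UR lamR Fl Fh
      in min (theta_lim \<epsilon>q (q_fun (plus_state UL lamL Fl)) (q_fun (plus_state UL lamL FD)))
             (theta_lim \<epsilon>q (q_fun (minus_state UR lamR Fl)) (q_fun (minus_state UR lamR FD))))"

definition flux_PCP :: "real \<Rightarrow> real \<Rightarrow> real^4 \<Rightarrow> real \<Rightarrow> real^4 \<Rightarrow> real \<Rightarrow> real^4 \<Rightarrow> real^4 \<Rightarrow> real^4" where
  "flux_PCP \<epsilon>D \<epsilon>q UL lamL UR lamR Fl Fh =
     (let \<theta> = theta_q \<epsilon>D \<epsilon>q UL lamL UR lamR Fl Fh;
          FD = flux_D \<epsilon>D UL lamL UR lamR Fl Fh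
      in (1 - \<theta>) *\<^sub>R Fl + \<theta> *\<^sub>R FD)"

definition F_PCP :: "real \<Rightarrow> real \<Rightarrow> real \<Rightarrow> (int \<Rightarrow> int \<Rightarrow> real^4) \<Rightarrow> real \<Rightarrow> (int \<Rightarrow> real)
     \<Rightarrow> (int \<Rightarrow> int \<Rightarrow> real^4) \<Rightarrow> int \<Rightarrow> int \<Rightarrow> real^4" where
  "F_PCP \<Gamma> \<epsilon>D \<epsilon>q Ub dt dx Fhigh i j =
     flux_PCP \<epsilon>D \<epsilon>q (Ub i j) (dt / dx i) (Ub (i+1) j) (dt / dx (i+1))
       (F_low \<Gamma> Ub i j) (Fhigh i j)"

definition G_PCP :: "real \<Rightarrow> real \<Rightarrow> real \<Rightarrow> (int \<Rightarrow> int \<Rightarrow> real^4) \<Rightarrow> real \<Rightarrow> (int \<Rightarrow> real)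
     \<Rightarrow> (int \<Rightarrow> int \<Rightarrow> real^4) \<Rightarrow> int \<Rightarrow> int \<Rightarrow> real^4" where
  "G_PCP \<Gamma> \<epsilon>D \<epsilon>q Ub dt dy Ghigh i j =
     flux_PCP \<epsilon>D \<epsilon>q (Ub i j) (dt / dy j) (Ub i (j+1)) (dt / dy (j+1))
       (G_low \<Gamma> Ub i j) (Ghigh i j)"

end

theory Submission
  imports Defs
begin

text \<open>Both split states adjacent to an interface depend affinely on the interface flux, and
  the PCP flux is a convex combination of the low-order flux and the density-limited flux
  (itself a convex combination in its first component).  The limiter coefficients are chosen
  exactly so that the density and the concave function q of the corresponding split states
  stay above \<open>\<epsilon>D\<close> and \<open>\<epsilon>q\<close>.  The updated average is the mean of the
  four split states, hence admissible because the admissible set is convex.\<close>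

definition density_momentum :: "real^4 \<Rightarrow> real \<times> real \<times> real" where
  "density_momentum U = (U$1, U$2, U$3)"

lemma q_fun_eq_norm: "q_fun U = U$4 - norm (density_momentum U)"
  by (simp add: q_fun_def density_momentum_def norm_prod_def add.assoc)

lemma density_momentum_convex_comb:
  "density_momentum (u *\<^sub>R A + v *\<^sub>R B) = u *\<^sub>R density_momentum A + v *\<^sub>R density_momentum B"
  by (simp add: density_momentum_def)

lemma concave_on_q_fun: "concave_on UNIV q_fun"
  unfolding concave_on_iff
proof (intro conjI convex_UNIV ballI allI impI)
  fix A B :: "real^4" and u v :: real
  assume "0 \<le> u" "0 \<le> v" "u + v = 1"
  have "norm (density_momentum (u *\<^sub>R A + v *\<^sub>R B))
      \<le> norm (u *\<^sub>R density_momentum A) + norm (v *\<^sub>R density_momentum B)"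
    unfolding density_momentum_convex_comb by (rule norm_triangle_ineq)
  also have "\<dots> = u * norm (density_momentum A) + v * norm (density_momentum B)"
    using \<open>0 \<le> u\<close> \<open>0 \<le> v\<close> by simp
  finally show "u * q_fun A + v * q_fun B \<le> q_fun (u *\<^sub>R A + v *\<^sub>R B)"
    by (simp add: q_fun_eq_norm algebra_simps)
qed

lemma convex_rhd_admissible: "convex {U. rhd_admissible U}"
proof (rule convexI)
  fix A B :: "real^4" and u v :: real
  assume A: "A \<in> {U. rhd_admissible U}" and B: "B \<in> {U. rhd_admissible U}"
    and uv: "0 \<le> u" "0 \<le> v" "u + v = 1"
  have "0 < u * A$1 + v * B$1"
    using A B uv by (cases "u = 0") (auto simp: rhd_admissible_def add_pos_nonneg)
  moreover have "0 < u * q_fun A + v * q_fun B"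
    using A B uv by (cases "u = 0") (auto simp: rhd_admissible_def add_pos_nonneg)
  moreover have "u * q_fun A + v * q_fun B \<le> q_fun (u *\<^sub>R A + v *\<^sub>R B)"
    using concave_on_q_fun uv by (simp add: concave_on_iff)
  ultimately show "u *\<^sub>R A + v *\<^sub>R B \<in> {U. rhd_admissible U}"
    by (simp add: rhd_admissible_def)
qed

lemma rhd_admissible_average4:
  assumes "rhd_admissible A" "rhd_admissible B" "rhd_admissible C" "rhd_admissible D"
  shows "rhd_admissible ((1/4) *\<^sub>R (A + B + C + D))"
proof -
  have mid: "rhd_admissible ((1/2) *\<^sub>R X + (1/2) *\<^sub>R Y)"
    if "rhd_admissible X" "rhd_admissible Y" for X Y
    using convexD[OF convex_rhd_admissible, of X Y "1/2" "1/2"] that by simp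
  have "(1/4) *\<^sub>R (A + B + C + D)
      = (1/2) *\<^sub>R ((1/2) *\<^sub>R A + (1/2) *\<^sub>R B) + (1/2) *\<^sub>R ((1/2) *\<^sub>R C + (1/2) *\<^sub>R D)"
    by (simp add: algebra_simps)
  then show ?thesis using assms by (simp add: mid)
qed

lemma theta_lim_bounds:
  assumes "\<epsilon> \<le> low"
  shows "0 \<le> theta_lim \<epsilon> low high" "theta_lim \<epsilon> low high \<le> 1"
  using assms by (auto simp: theta_lim_def divide_simps)

lemma theta_lim_convex_comb_ge:
  assumes "\<epsilon> \<le> low" "0 \<le> t" "t \<le> theta_lim \<epsilon> low high"
  shows "\<epsilon> \<le> (1 - t) * low + t * high"
proof (cases "high < \<epsilon>")
  case True
  then have "t * (low - high) \<le> low - \<epsilon>"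
    using assms by (auto simp: theta_lim_def pos_le_divide_eq)
  then show ?thesis by (simp add: algebra_simps)
next
  case False
  then have "t \<le> 1" using assms by (simp add: theta_lim_def)
  have "(1 - t) * \<epsilon> + t * \<epsilon> \<le> (1 - t) * low + t * high"
    using assms False \<open>t \<le> 1\<close> by (intro add_mono mult_left_mono) auto
  then show ?thesis by (simp add: algebra_simps)
qed

lemma minus_state_eq_plus_state: "minus_state U lam F = plus_state U (- lam) F"
  by (simp add: minus_state_def plus_state_def)

lemma plus_state_convex_comb:
  "plus_state U lam ((1 - t) *\<^sub>R A + t *\<^sub>R B)
     = (1 - t) *\<^sub>R plus_state U lam A + t *\<^sub>R plus_state U lam B"
  by (simp add: plus_state_def algebra_simps)

lemma plus_state_density_convex_comb:
  assumes "FD $ 1 = (1 - t) * Fl $ 1 + t * Fh $ 1"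
  shows "plus_state U lam FD $ 1 = (1 - t) * plus_state U lam Fl $ 1 + t * plus_state U lam Fh $ 1"
  unfolding plus_state_def by (simp add: assms algebra_simps)

lemma flux_D_density:
  "flux_D \<epsilon>D UL lamL UR lamR Fl Fh $ 1
     = (1 - theta_D \<epsilon>D UL lamL UR lamR Fl Fh) * Fl $ 1 + theta_D \<epsilon>D UL lamL UR lamR Fl Fh * Fh $ 1"
  by (simp add: flux_D_def Let_def)

lemma limited_split_state_admissible:
  fixes U :: "real^4" and lam :: real
  defines "V \<equiv> plus_state U lam"
  assumes eps: "0 < \<epsilon>D" "0 < \<epsilon>q"
    and low: "\<epsilon>D \<le> V Fl $ 1" "\<epsilon>q \<le> q_fun (V Fl)"
    and tD: "0 \<le> tD" "tD \<le> theta_lim \<epsilon>D (V Fl $ 1) (V Fh $ 1)"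
    and FD: "FD $ 1 = (1 - tD) * Fl $ 1 + tD * Fh $ 1"
    and tq: "0 \<le> tq" "tq \<le> theta_lim \<epsilon>q (q_fun (V Fl)) (q_fun (V FD))"
  shows "rhd_admissible (V ((1 - tq) *\<^sub>R Fl + tq *\<^sub>R FD))"
proof -
  have tq_le_1: "tq \<le> 1" using tq theta_lim_bounds(2)[OF low(2), of "q_fun (V FD)"] by linarith
  have V_comb: "V ((1 - tq) *\<^sub>R Fl + tq *\<^sub>R FD) = (1 - tq) *\<^sub>R V Fl + tq *\<^sub>R V FD"
    unfolding V_def by (rule plus_state_convex_comb)
  have "\<epsilon>D \<le> V FD $ 1"
    using theta_lim_convex_comb_ge[OF low(1) tD] plus_state_density_convex_comb[OF FD]
    by (simp add: V_def)
  then have "(1 - tq) * \<epsilon>D + tq * \<epsilon>D \<le> (1 - tq) * V Fl $ 1 + tq * V FD $ 1"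
    using low tq tq_le_1 by (intro add_mono mult_left_mono) auto
  then have density: "0 < ((1 - tq) *\<^sub>R V Fl + tq *\<^sub>R V FD) $ 1"
    using eps by (simp add: algebra_simps)
  have "\<epsilon>q \<le> (1 - tq) * q_fun (V Fl) + tq * q_fun (V FD)"
    by (rule theta_lim_convex_comb_ge[OF low(2) tq])
  also have "\<dots> \<le> q_fun ((1 - tq) *\<^sub>R V Fl + tq *\<^sub>R V FD)"
    using concave_onD[OF concave_on_q_fun] tq tq_le_1 by blast
  finally show ?thesis
    using density eps unfolding V_comb rhd_admissible_def by simp
qed

lemma flux_PCP_split_states_admissible:
  assumes eps: "0 < \<epsilon>D" "0 < \<epsilon>q"
    and left: "\<epsilon>D \<le> plus_state UL lamL Fl $ 1" "\<epsilon>q \<le> q_fun (plus_state UL lamL Fl)"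
    and right: "\<epsilon>D \<le> minus_state UR lamR Fl $ 1" "\<epsilon>q \<le> q_fun (minus_state UR lamR Fl)"
  shows "rhd_admissible (plus_state UL lamL (flux_PCP \<epsilon>D \<epsilon>q UL lamL UR lamR Fl Fh))"
    and "rhd_admissible (minus_state UR lamR (flux_PCP \<epsilon>D \<epsilon>q UL lamL UR lamR Fl Fh))"
proof -
  define tD where "tD = theta_D \<epsilon>D UL lamL UR lamR Fl Fh"
  define FD where "FD = flux_D \<epsilon>D UL lamL UR lamR Fl Fh"
  define tq where "tq = theta_q \<epsilon>D \<epsilon>q UL lamL UR lamR Fl Fh"
  have PCP: "flux_PCP \<epsilon>D \<epsilon>q UL lamL UR lamR Fl Fh = (1 - tq) *\<^sub>R Fl + tq *\<^sub>R FD"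
    unfolding flux_PCP_def tq_def FD_def Let_def ..
  have FD1: "FD $ 1 = (1 - tD) * Fl $ 1 + tD * Fh $ 1"
    unfolding FD_def tD_def by (rule flux_D_density)
  have tD: "tD \<le> theta_lim \<epsilon>D (plus_state UL lamL Fl $ 1) (plus_state UL lamL Fh $ 1)"
    "tD \<le> theta_lim \<epsilon>D (minus_state UR lamR Fl $ 1) (minus_state UR lamR Fh $ 1)"
    "0 \<le> tD"
    using theta_lim_bounds(1)[OF left(1)] theta_lim_bounds(1)[OF right(1)]
    by (auto simp: tD_def theta_D_def)
  have tq: "tq \<le> theta_lim \<epsilon>q (q_fun (plus_state UL lamL Fl)) (q_fun (plus_state UL lamL FD))"
    "tq \<le> theta_lim \<epsilon>q (q_fun (minus_state UR lamR Fl)) (q_fun (minus_state UR lamR FD))"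
    "0 \<le> tq"
    using theta_lim_bounds(1)[OF left(2)] theta_lim_bounds(1)[OF right(2)]
    by (auto simp: tq_def theta_q_def FD_def Let_def)
  show "rhd_admissible (plus_state UL lamL (flux_PCP \<epsilon>D \<epsilon>q UL lamL UR lamR Fl Fh))"
    unfolding PCP
    using limited_split_state_admissible[OF eps left _ tD(1) FD1 _ tq(1)] tD(3) tq(3) .
  show "rhd_admissible (minus_state UR lamR (flux_PCP \<epsilon>D \<epsilon>q UL lamL UR lamR Fl Fh))"
    using right tD(2) tq(2) tD(3) tq(3)
      limited_split_state_admissible[where U = UR and lam = "- lamR", OF eps _ _ _ _ FD1]
    unfolding PCP minus_state_eq_plus_state by blast
qed

lemma update_eq_average_split_states:
  "U - lx *\<^sub>R (Fr - Fl) - ly *\<^sub>R (Gr - Gl)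
     = (1/4) *\<^sub>R (plus_state U lx Fr + minus_state U lx Fl + plus_state U ly Gr + minus_state U ly Gl)"
  by (simp add: plus_state_def minus_state_def vec_eq_iff algebra_simps)

theorem theorem3:
  fixes \<Gamma> dt \<epsilon>D \<epsilon>q :: real
    and dx dy :: "int \<Rightarrow> real"
    and Ub Fhigh Ghigh :: "int \<Rightarrow> int \<Rightarrow> real^4"
  assumes Gamma: "1 < \<Gamma>" "\<Gamma> \<le> 2"
    and mesh: "\<forall>i. 0 < dx i" "\<forall>j. 0 < dy j"
    and dt_pos: "0 < dt"
    and avg_adm: "\<forall>i j. rhd_admissible (Ub i j)"
    and CFL: "\<forall>i j. dt \<le> (1/4) * (dx i / alpha_x \<Gamma> Ub i j)
                  \<and> dt \<le> (1/4) * (dy j / beta_y \<Gamma> Ub i j)"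
    and eps: "0 < \<epsilon>D" "0 < \<epsilon>q"
    and low_adm: "\<forall>i j.
         rhd_admissible (plus_state (Ub i j) (dt / dx i) (F_low \<Gamma> Ub i j))
       \<and> rhd_admissible (minus_state (Ub i j) (dt / dx i) (F_low \<Gamma> Ub (i-1) j))
       \<and> rhd_admissible (plus_state (Ub i j) (dt / dy j) (G_low \<Gamma> Ub i j))
       \<and> rhd_admissible (minus_state (Ub i j) (dt / dy j) (G_low \<Gamma> Ub i (j-1)))"
    and low_eps: "\<forall>i j.
         \<epsilon>D \<le> plus_state (Ub i j) (dt / dx i) (F_low \<Gamma> Ub i j) $ 1
       \<and> \<epsilon>D \<le> minus_state (Ub i j) (dt / dx i) (F_low \<Gamma> Ub (i-1) j) $ 1
       \<and> \<epsilon>D \<le> plus_state (Ub i j) (dt / dy j) (G_low \<Gamma> Ub i j) $ 1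
       \<and> \<epsilon>D \<le> minus_state (Ub i j) (dt / dy j) (G_low \<Gamma> Ub i (j-1)) $ 1
       \<and> \<epsilon>q \<le> q_fun (plus_state (Ub i j) (dt / dx i) (F_low \<Gamma> Ub i j))
       \<and> \<epsilon>q \<le> q_fun (minus_state (Ub i j) (dt / dx i) (F_low \<Gamma> Ub (i-1) j))
       \<and> \<epsilon>q \<le> q_fun (plus_state (Ub i j) (dt / dy j) (G_low \<Gamma> Ub i j))
       \<and> \<epsilon>q \<le> q_fun (minus_state (Ub i j) (dt / dy j) (G_low \<Gamma> Ub i (j-1)))"
  shows "\<forall>i j.
     (let F = F_PCP \<Gamma> \<epsilon>D \<epsilon>q Ub dt dx Fhigh;
          G = G_PCP \<Gamma> \<epsilon>D \<epsilon>q Ub dt dy Ghigh;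
          Unew = Ub i j - (dt / dx i) *\<^sub>R (F i j - F (i-1) j)
                        - (dt / dy j) *\<^sub>R (G i j - G i (j-1))
      in Unew = (1/4) *\<^sub>R (plus_state (Ub i j) (dt / dx i) (F i j)
                          + minus_state (Ub i j) (dt / dx i) (F (i-1) j)
                          + plus_state (Ub i j) (dt / dy j) (G i j)
                          + minus_state (Ub i j) (dt / dy j) (G i (j-1)))
         \<and> rhd_admissible Unew)"
proof -
  \<comment> \<open>Only \<open>eps\<close> and \<open>low_eps\<close> are needed: in the paper the CFL condition merely makes
    the low-order split states admissible, which \<open>low_eps\<close> already implies.\<close>
  have adm: "rhd_admissible (plus_state (Ub i j) (dt / dx i) (F_PCP \<Gamma> \<epsilon>D \<epsilon>q Ub dt dx Fhigh i j))"
    "rhd_admissible (minus_state (Ub i j) (dt / dx i) (F_PCP \<Gamma> \<epsilon>D \<epsilon>q Ub dt dx Fhigh (i-1) j))"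
    "rhd_admissible (plus_state (Ub i j) (dt / dy j) (G_PCP \<Gamma> \<epsilon>D \<epsilon>q Ub dt dy Ghigh i j))"
    "rhd_admissible (minus_state (Ub i j) (dt / dy j) (G_PCP \<Gamma> \<epsilon>D \<epsilon>q Ub dt dy Ghigh i (j-1)))"
    for i j
    using low_eps[rule_format, of i j] low_eps[rule_format, of "i+1" j]
      low_eps[rule_format, of "i-1" j] low_eps[rule_format, of i "j+1"] low_eps[rule_format, of i "j-1"]
    by (auto simp: F_PCP_def G_PCP_def intro!: flux_PCP_split_states_admissible[OF eps])
  show ?thesis
    by (simp only: Let_def update_eq_average_split_states rhd_admissible_average4 adm simp_thms)
qed

end
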